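(* Let $X$ be a finite set with at least four elements and let $\Lambda$ be a nontrivial finite distributive lattice. Then for every field $k$, the monoid algebra $k\Lambda^{X\times X}$ of the monoid of $\Lambda$-generalized correspondences on $X$ is of infinite representation type.
   Context: A $\Lambda$-generalized correspondence on $X$ is a function $X\times X\to\Lambda$. The product of two such, $R$ and $S$, is defined by $RS(x,z)=\bigvee_{y\in X} R(x,y)\wedge S(y,z)$ for all $x,z\in X$; with this product the set $\Lambda^{X\times X}$ is a monoid. Nontrivial means $\Lambda$ has more than one element. A finite-dimensional $k$-algebra is of infinite representation type if it has infinitely many isomorphism classes of finite-dimensional indecomposable modules. *)

theory Defs
  imports Main "Jordan_Normal_Form.Matrix"
begin

text \<open>Lambda is a finite distributive lattice; being finite and nonempty it is bounded,
  so we work in the class of bounded distributive lattices (top/bot are then forced).\<close>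

type_synonym ('x, 'l) corr = "'x \<Rightarrow> 'x \<Rightarrow> 'l"

definition corr_mult :: "('x::finite, 'l::{distrib_lattice,bounded_lattice}) corr
    \<Rightarrow> ('x, 'l) corr \<Rightarrow> ('x, 'l) corr" where
  "corr_mult R S = (\<lambda>x z. Sup_fin {inf (R x y) (S y z) | y. True})"

definition corr_one :: "('x::finite, 'l::{distrib_lattice,bounded_lattice}) corr" where
  "corr_one = (\<lambda>x y. if x = y then Orderings.top else Orderings.bot)"

text \<open>A finite-dimensional (unital) module over the monoid algebra k[M], M the monoid
  of correspondences, is the same thing as a matrix representation of M:
  a pair (n, rho) with rho a monoid homomorphism from M into the n x n matrices over k.\<close>

definition is_rep :: "nat \<Rightarrow> (('x::finite, 'l::{distrib_lattice,bounded_lattice}) corr \<Rightarrow> 'k::field mat) \<Rightarrow> bool" where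
  "is_rep n \<rho> \<longleftrightarrow> (\<forall>a. \<rho> a \<in> carrier_mat n n) \<and> \<rho> corr_one = 1\<^sub>m n
     \<and> (\<forall>a b. \<rho> (corr_mult a b) = \<rho> a * \<rho> b)"

definition rep_iso :: "nat \<times> (('x::finite, 'l::{distrib_lattice,bounded_lattice}) corr \<Rightarrow> 'k::field mat)
    \<Rightarrow> nat \<times> (('x, 'l) corr \<Rightarrow> 'k mat) \<Rightarrow> bool" where
  "rep_iso r s \<longleftrightarrow> fst r = fst s \<and>
     (\<exists>P \<in> carrier_mat (fst r) (fst r). invertible_mat P \<and> (\<forall>a. P * snd r a = snd s a * P))"

definition rep_sum :: "nat \<times> (('x::finite, 'l::{distrib_lattice,bounded_lattice}) corr \<Rightarrow> 'k::field mat)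
    \<Rightarrow> nat \<times> (('x, 'l) corr \<Rightarrow> 'k mat) \<Rightarrow> nat \<times> (('x, 'l) corr \<Rightarrow> 'k mat)" where
  "rep_sum r s = (fst r + fst s,
     \<lambda>a. four_block_mat (snd r a) (0\<^sub>m (fst r) (fst s)) (0\<^sub>m (fst s) (fst r)) (snd s a))"

definition indecomposable :: "nat \<times> (('x::finite, 'l::{distrib_lattice,bounded_lattice}) corr \<Rightarrow> 'k::field mat) \<Rightarrow> bool" where
  "indecomposable r \<longleftrightarrow> is_rep (fst r) (snd r) \<and> fst r > 0 \<and>
     \<not> (\<exists>s t. is_rep (fst s) (snd s) \<and> is_rep (fst t) (snd t) \<and> fst s > 0 \<and> fst t > 0
            \<and> rep_iso r (rep_sum s t))"

definition infinite_rep_type :: "'k::field itself \<Rightarrow> ('x::finite, 'l::{distrib_lattice,bounded_lattice}) corr itself \<Rightarrow> bool" where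
  "infinite_rep_type _ _ \<longleftrightarrow>
     (\<exists>S :: (nat \<times> (('x, 'l) corr \<Rightarrow> 'k mat)) set. infinite S \<and> (\<forall>r\<in>S. indecomposable r)
        \<and> (\<forall>r\<in>S. \<forall>s\<in>S. rep_iso r s \<longrightarrow> r = s))"

end

theory Submission
  imports Defs "HOL-Combinatorics.Cycles" "HOL-Combinatorics.Orbits"
begin

(* Fix an atom a of the lattice. Atoms of a distributive lattice are join-prime, so reading a
   correspondence R at a (x ~ y iff a <= R x y) is a monoid homomorphism to the monoid of
   Boolean relations on X, whose units are the permutations. The reflexive closure of a cycle
   of length at least 3 is irreducible there: in every factorisation one factor is a
   permutation. For an irreducible p, the indicator of the two-sided unit orbit of p is a
   derivation with respect to the indicator pi of the units. A 3-cycle and a 4-cycle lie in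
   different orbits, with indicators chi3 and chi4, so for every n, applying

     pi I + chi3 A + chi4 B

   to R read at a is a representation on k^(2n+1), where A and B are the two arrows of the Kronecker module
   of dimension vector (n, n+1): all products of A and B vanish. An idempotent commuting with
   A and B is 0 or I, so these representations are indecomposable, and their dimensions are
   pairwise different. *)

section \<open>Irreducible elements of Dedekind-finite monoids\<close>

locale dedekind_finite_monoid = monoid +
  assumes inverse_comm: "\<lbrakk>x \<in> carrier G; y \<in> carrier G; x \<otimes> y = \<one>\<rbrakk> \<Longrightarrow> y \<otimes> x = \<one>"

lemma (in dedekind_finite_monoid) Units_mult_iff:
  assumes a: "a \<in> carrier G" and b: "b \<in> carrier G"
  shows "a \<otimes> b \<in> Units G \<longleftrightarrow> a \<in> Units G \<and> b \<in> Units G"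
proof
  assume ab: "a \<otimes> b \<in> Units G"
  define c where "c = inv (a \<otimes> b)"
  have c: "c \<in> carrier G" and abc: "a \<otimes> (b \<otimes> c) = \<one>" and cab: "(c \<otimes> a) \<otimes> b = \<one>"
    using ab a b by (simp_all add: c_def flip: m_assoc) (simp add: m_assoc)
  have "(b \<otimes> c) \<otimes> a = \<one>" "b \<otimes> (c \<otimes> a) = \<one>"
    using inverse_comm[OF a _ abc] inverse_comm[OF _ b cab] a b c by simp_all
  then show "a \<in> Units G \<and> b \<in> Units G"
    using abc cab a b c unfolding Units_def by blast
qed auto

definition irreducible_elem :: "('a, 'b) monoid_scheme \<Rightarrow> 'a \<Rightarrow> bool" where
  "irreducible_elem G p \<longleftrightarrow> p \<in> carrier G \<and> p \<notin> Units G \<and>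
     (\<forall>a \<in> carrier G. \<forall>b \<in> carrier G. a \<otimes>\<^bsub>G\<^esub> b = p \<longrightarrow> a \<in> Units G \<or> b \<in> Units G)"

definition unit_orbit :: "('a, 'b) monoid_scheme \<Rightarrow> 'a \<Rightarrow> 'a set" where
  "unit_orbit G p = {u \<otimes>\<^bsub>G\<^esub> p \<otimes>\<^bsub>G\<^esub> v | u v. u \<in> Units G \<and> v \<in> Units G}"

context monoid
begin

lemma Units_inv_cancel_left: "u \<in> Units G \<Longrightarrow> x \<in> carrier G \<Longrightarrow> inv u \<otimes> (u \<otimes> x) = x"
  by (simp add: Units_closed flip: m_assoc)

lemma Units_inv_cancel_right: "u \<in> Units G \<Longrightarrow> x \<in> carrier G \<Longrightarrow> x \<otimes> u \<otimes> inv u = x"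
  by (simp add: Units_closed m_assoc)

lemma unit_orbit_self: "p \<in> carrier G \<Longrightarrow> p \<in> unit_orbit G p"
  unfolding unit_orbit_def by (intro CollectI exI[of _ \<one>]) simp

lemma unit_orbit_carrier: "p \<in> carrier G \<Longrightarrow> q \<in> unit_orbit G p \<Longrightarrow> q \<in> carrier G"
  unfolding unit_orbit_def by (auto intro: Units_closed)

lemma unit_orbit_sym:
  assumes q: "q \<in> unit_orbit G p" and p: "p \<in> carrier G"
  shows "p \<in> unit_orbit G q"
proof -
  obtain u v where uv: "u \<in> Units G" "v \<in> Units G" and "q = u \<otimes> p \<otimes> v"
    using q unfolding unit_orbit_def by blast
  then have "p = inv u \<otimes> q \<otimes> inv v"
    using p by (simp add: Units_closed m_assoc Units_inv_cancel_left)
  then show ?thesis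
    using uv unfolding unit_orbit_def by blast
qed

lemma unit_orbit_mult_Units_left:
  assumes u: "u \<in> Units G" and a: "a \<in> carrier G" and p: "p \<in> carrier G"
  shows "u \<otimes> a \<in> unit_orbit G p \<longleftrightarrow> a \<in> unit_orbit G p"
proof
  assume "a \<in> unit_orbit G p"
  then obtain v w where vw: "v \<in> Units G" "w \<in> Units G" and "a = v \<otimes> p \<otimes> w"
    unfolding unit_orbit_def by blast
  then have "u \<otimes> a = (u \<otimes> v) \<otimes> p \<otimes> w"
    using u p by (simp add: Units_closed m_assoc)
  then show "u \<otimes> a \<in> unit_orbit G p"
    using u vw unfolding unit_orbit_def by blast
next
  assume "u \<otimes> a \<in> unit_orbit G p"
  then obtain v w where vw: "v \<in> Units G" "w \<in> Units G" and "u \<otimes> a = v \<otimes> p \<otimes> w"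
    unfolding unit_orbit_def by blast
  then have "a = (inv u \<otimes> v) \<otimes> p \<otimes> w"
    using u a p by (metis Units_closed Units_inv_cancel_left Units_inv_closed m_assoc m_closed)
  then show "a \<in> unit_orbit G p"
    using u vw unfolding unit_orbit_def by blast
qed

lemma unit_orbit_mult_Units_right:
  assumes u: "u \<in> Units G" and a: "a \<in> carrier G" and p: "p \<in> carrier G"
  shows "a \<otimes> u \<in> unit_orbit G p \<longleftrightarrow> a \<in> unit_orbit G p"
proof
  assume "a \<in> unit_orbit G p"
  then obtain v w where vw: "v \<in> Units G" "w \<in> Units G" and "a = v \<otimes> p \<otimes> w"
    unfolding unit_orbit_def by blast
  then have "a \<otimes> u = v \<otimes> p \<otimes> (w \<otimes> u)"
    using u p by (simp add: Units_closed m_assoc)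
  then show "a \<otimes> u \<in> unit_orbit G p"
    using u vw unfolding unit_orbit_def by blast
next
  assume "a \<otimes> u \<in> unit_orbit G p"
  then obtain v w where vw: "v \<in> Units G" "w \<in> Units G" and "a \<otimes> u = v \<otimes> p \<otimes> w"
    unfolding unit_orbit_def by blast
  then have "a = v \<otimes> p \<otimes> (w \<otimes> inv u)"
    using u a p by (metis Units_closed Units_inv_cancel_right Units_inv_closed m_assoc m_closed)
  then show "a \<in> unit_orbit G p"
    using u vw unfolding unit_orbit_def by blast
qed

lemma irreducible_elem_unit_orbit:
  assumes p: "irreducible_elem G p" and q: "q \<in> unit_orbit G p"
  shows "irreducible_elem G q"
proof -
  have pc: "p \<in> carrier G" using p unfolding irreducible_elem_def by blast
  have qc: "q \<in> carrier G" using unit_orbit_carrier[OF pc q] .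
  obtain u v where uv: "u \<in> Units G" "v \<in> Units G" and p_eq: "p = u \<otimes> q \<otimes> v"
    using unit_orbit_sym[OF q pc] unfolding unit_orbit_def by blast
  have "q \<notin> Units G"
  proof
    assume "q \<in> Units G"
    then have "p \<in> Units G" using uv p_eq by simp
    then show False using p unfolding irreducible_elem_def by blast
  qed
  moreover have "a \<in> Units G \<or> b \<in> Units G"
    if ab: "a \<in> carrier G" "b \<in> carrier G" "a \<otimes> b = q" for a b
  proof -
    have "(u \<otimes> a) \<otimes> (b \<otimes> v) = p"
      unfolding p_eq ab(3)[symmetric] using uv ab(1,2) by (simp add: Units_closed m_assoc)
    moreover have "u \<otimes> a \<in> carrier G" "b \<otimes> v \<in> carrier G"
      using uv ab(1,2) by (simp_all add: Units_closed)
    ultimately have "u \<otimes> a \<in> Units G \<or> b \<otimes> v \<in> Units G"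
      using p unfolding irreducible_elem_def by blast
    then show ?thesis
    proof
      assume "u \<otimes> a \<in> Units G"
      then have "inv u \<otimes> (u \<otimes> a) \<in> Units G" using uv by simp
      then show ?thesis using uv ab by (simp add: Units_inv_cancel_left)
    next
      assume "b \<otimes> v \<in> Units G"
      then have "(b \<otimes> v) \<otimes> inv v \<in> Units G" using uv by simp
      then show ?thesis using uv ab by (simp add: Units_inv_cancel_right)
    qed
  qed
  ultimately show ?thesis using qc unfolding irreducible_elem_def by blast
qed

lemma unit_orbit_disjoint_Units:
  "irreducible_elem G p \<Longrightarrow> a \<in> unit_orbit G p \<Longrightarrow> a \<notin> Units G"
  using irreducible_elem_unit_orbit unfolding irreducible_elem_def by blast

end

context dedekind_finite_monoid
begin

lemma of_bool_Units_mult: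
  "a \<in> carrier G \<Longrightarrow> b \<in> carrier G \<Longrightarrow>
    (of_bool (a \<otimes> b \<in> Units G) :: 'r::semiring_1) = of_bool (a \<in> Units G) * of_bool (b \<in> Units G)"
  by (simp add: Units_mult_iff)

lemma of_bool_unit_orbit_mult:
  assumes p: "irreducible_elem G p" and a: "a \<in> carrier G" and b: "b \<in> carrier G"
  shows "(of_bool (a \<otimes> b \<in> unit_orbit G p) :: 'r::semiring_1)
    = of_bool (a \<in> unit_orbit G p) * of_bool (b \<in> Units G)
      + of_bool (a \<in> Units G) * of_bool (b \<in> unit_orbit G p)"
proof -
  have pc: "p \<in> carrier G" using p unfolding irreducible_elem_def by blast
  note not_unit = unit_orbit_disjoint_Units[OF p]
  consider "a \<in> Units G" "b \<in> Units G" | "a \<in> Units G" "b \<notin> Units G"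
    | "a \<notin> Units G" "b \<in> Units G" | "a \<notin> Units G" "b \<notin> Units G" by blast
  then show ?thesis
  proof cases
    case 1
    then show ?thesis using not_unit a b by (auto simp: Units_mult_iff)
  next
    case 2
    then show ?thesis using unit_orbit_mult_Units_left[OF _ b pc] not_unit by auto
  next
    case 3
    then show ?thesis using unit_orbit_mult_Units_right[OF _ a pc] not_unit by auto
  next
    case 4
    then have "a \<otimes> b \<notin> unit_orbit G p"
      using irreducible_elem_unit_orbit[OF p] a b unfolding irreducible_elem_def by blast
    then show ?thesis using 4 by simp
  qed
qed

end

section \<open>Boolean relations\<close>

definition perm_rel :: "('x \<Rightarrow> 'x \<Rightarrow> bool) \<Rightarrow> bool" where
  "perm_rel R \<longleftrightarrow> (\<exists>g. bij g \<and> R = (\<lambda>x y. y = g x))"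

definition rel_monoid :: "('x \<Rightarrow> 'x \<Rightarrow> bool) monoid" where
  "rel_monoid = \<lparr>carrier = UNIV, mult = (OO), one = (=)\<rparr>"

lemma rel_monoid_simps [simp]:
  "carrier rel_monoid = UNIV" "R \<otimes>\<^bsub>rel_monoid\<^esub> S = R OO S" "\<one>\<^bsub>rel_monoid\<^esub> = (=)"
  by (simp_all add: rel_monoid_def)

lemma monoid_rel_monoid: "monoid rel_monoid"
  by (rule monoidI) (auto simp: relcompp_assoc)

lemma relcompp_conversep_perm_rel:
  assumes "perm_rel R"
  shows "R OO R\<inverse>\<inverse> = (=)" "R\<inverse>\<inverse> OO R = (=)"
proof -
  obtain g where g: "bij g" and R: "R = (\<lambda>x y. y = g x)"
    using assms unfolding perm_rel_def by blast
  show "R OO R\<inverse>\<inverse> = (=)"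
    using bij_is_inj[OF g] by (auto simp: R fun_eq_iff dest: injD)
  show "R\<inverse>\<inverse> OO R = (=)"
    using bij_is_surj[OF g] by (auto simp: R fun_eq_iff)
qed

lemma perm_rel_conversep:
  assumes "perm_rel R"
  shows "perm_rel R\<inverse>\<inverse>"
proof -
  obtain g where g: "bij g" and R: "R = (\<lambda>x y. y = g x)"
    using assms unfolding perm_rel_def by blast
  have "R\<inverse>\<inverse> = (\<lambda>x y. y = inv_into UNIV g x)"
    using g by (auto simp: R fun_eq_iff bij_inv_eq_iff)
  then show ?thesis
    unfolding perm_rel_def using bij_imp_bij_inv[OF g] by blast
qed

lemma perm_rel_if_relcompp_eq:
  fixes R S :: "'x::finite \<Rightarrow> 'x \<Rightarrow> bool"
  assumes RS: "R OO S = (=)"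
  shows "perm_rel R" "S = R\<inverse>\<inverse>"
proof -
  have RS_iff: "(\<exists>y. R x y \<and> S y z) \<longleftrightarrow> x = z" for x z
    using fun_cong[OF fun_cong[OF RS, of x], of z] by auto
  define f where "f x = (SOME y. R x y \<and> S y x)" for x
  have f: "R x (f x) \<and> S (f x) x" for x
    unfolding f_def by (rule someI_ex) (use RS_iff in blast)
  have "inj f"
  proof (rule injI)
    fix x z
    assume "f x = f z"
    then have "R x (f z) \<and> S (f z) z" using f by metis
    then show "x = z" using RS_iff by blast
  qed
  then have bij: "bij f"
    by (simp add: bij_def finite_UNIV_inj_surj)
  have R_iff: "R x y \<longleftrightarrow> y = f x" for x y
  proof
    assume "R x y"
    obtain w where "y = f w" using surjD[OF bij_is_surj[OF bij]] by blast
    with \<open>R x y\<close> f have "x = w" using RS_iff by blast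
    with \<open>y = f w\<close> show "y = f x" by simp
  qed (use f in simp)
  then show "perm_rel R"
    unfolding perm_rel_def using bij by blast
  have S_iff: "S (f w) z \<longleftrightarrow> R z (f w)" for w z
    using RS_iff[of w z] by (auto simp: R_iff bij_is_inj[OF bij] inj_eq)
  show "S = R\<inverse>\<inverse>"
  proof (intro ext)
    fix y z
    obtain w where "y = f w" using surjD[OF bij_is_surj[OF bij]] by blast
    then show "S y z = R\<inverse>\<inverse> y z" using S_iff by simp
  qed
qed

lemma Units_rel_monoid: "Units (rel_monoid :: ('x::finite \<Rightarrow> 'x \<Rightarrow> bool) monoid) = {R. perm_rel R}"
proof (intro equalityI subsetI)
  fix R :: "'x \<Rightarrow> 'x \<Rightarrow> bool"
  assume "R \<in> Units rel_monoid"
  then obtain S where "R OO S = (=)"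
    unfolding Units_def by auto
  then show "R \<in> {R. perm_rel R}"
    using perm_rel_if_relcompp_eq(1) by blast
next
  fix R :: "'x \<Rightarrow> 'x \<Rightarrow> bool"
  assume "R \<in> {R. perm_rel R}"
  then show "R \<in> Units rel_monoid"
    using relcompp_conversep_perm_rel[of R] unfolding Units_def by auto
qed

lemma dedekind_finite_rel_monoid:
  "dedekind_finite_monoid (rel_monoid :: ('x::finite \<Rightarrow> 'x \<Rightarrow> bool) monoid)"
proof (intro dedekind_finite_monoid.intro dedekind_finite_monoid_axioms.intro monoid_rel_monoid)
  fix R S :: "'x \<Rightarrow> 'x \<Rightarrow> bool"
  assume "R \<otimes>\<^bsub>rel_monoid\<^esub> S = \<one>\<^bsub>rel_monoid\<^esub>"
  then have "R OO S = (=)" by simp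
  then have "perm_rel R" "S = R\<inverse>\<inverse>"
    by (rule perm_rel_if_relcompp_eq)+
  then show "S \<otimes>\<^bsub>rel_monoid\<^esub> R = \<one>\<^bsub>rel_monoid\<^esub>"
    using relcompp_conversep_perm_rel(2) by simp
qed

lemma cyclic_on_induct:
  assumes cyclic: "cyclic_on p A" and x: "x \<in> A" "Q x"
    and step: "\<And>y. y \<in> A \<Longrightarrow> Q y \<Longrightarrow> Q (p y)" and y: "y \<in> A"
  shows "Q y"
proof -
  have A: "A = orbit p x"
    using cyclic x(1) unfolding cyclic_on_alldef by blast
  have "y \<in> orbit p x" using y A by blast
  then show ?thesis
  proof induction
    case base
    then show ?case using step x by blast
  next
    case (step z)
    then show ?case using A \<open>\<And>y. y \<in> A \<Longrightarrow> Q y \<Longrightarrow> Q (p y)\<close> by blast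
  qed
qed

definition refl_graph :: "('x \<Rightarrow> 'x) \<Rightarrow> 'x \<Rightarrow> 'x \<Rightarrow> bool" where
  "refl_graph p = (\<lambda>x y. y = x \<or> y = p x)"

lemma refl_graph_not_perm_rel:
  assumes "p x \<noteq> x"
  shows "\<not> perm_rel (refl_graph p)"
  using assms unfolding perm_rel_def refl_graph_def by (metis (full_types))

lemma relcompp_refl_graph_matching:
  fixes p :: "'x::finite \<Rightarrow> 'x"
    and S T :: "'x \<Rightarrow> 'x \<Rightarrow> bool"
  assumes no_2_cycle: "\<And>x. p (p x) = x \<Longrightarrow> p x = x" and ST: "S OO T = refl_graph p"
  obtains f where "bij f" "\<And>x. S x (f x)" "\<And>x. T (f x) x"
    "\<And>x w. S x (f w) \<Longrightarrow> w = x \<or> w = p x" "\<And>w z. T (f w) z \<Longrightarrow> z = w \<or> z = p w"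
proof -
  have ST_iff: "(\<exists>y. S x y \<and> T y z) \<longleftrightarrow> z = x \<or> z = p x" for x z
    using fun_cong[OF fun_cong[OF ST, of x], of z] by (auto simp: refl_graph_def)
  define f where "f x = (SOME y. S x y \<and> T y x)" for x
  have f: "S x (f x) \<and> T (f x) x" for x
    unfolding f_def by (rule someI_ex) (use ST_iff in blast)
  have "inj f"
  proof (rule injI)
    fix x x'
    assume "f x = f x'"
    then have "x' = x \<or> x' = p x" "x = x' \<or> x = p x'"
      using f ST_iff by metis+
    then show "x = x'" using no_2_cycle by metis
  qed
  then have bij: "bij f"
    by (simp add: bij_def finite_UNIV_inj_surj)
  have S_f: "w = x \<or> w = p x" if "S x (f w)" for x w
    using that f ST_iff by blast
  have T_f: "z = w \<or> z = p w" if "T (f w) z" for w z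
    using that f ST_iff by blast
  show thesis
    by (rule that[OF bij _ _ S_f T_f]) (use f in blast)+
qed

lemma refl_graph_factor_step:
  fixes p f :: "'x \<Rightarrow> 'x" and S T :: "'x \<Rightarrow> 'x \<Rightarrow> bool"
  assumes inj: "inj p" and no_2_cycle: "\<And>x. p (p x) = x \<Longrightarrow> p x = x"
    and ST: "S OO T = refl_graph p" and surj: "surj f"
    and S_f: "\<And>x w. S x (f w) \<Longrightarrow> w = x \<or> w = p x"
    and x: "p x \<noteq> x" "S x (f (p x))"
  shows "\<not> T (f (p x)) (p (p x))" and "S (p x) (f (p (p x)))"
proof -
  have ST_iff: "(\<exists>y. S x y \<and> T y z) \<longleftrightarrow> z = x \<or> z = p x" for x z
    using fun_cong[OF fun_cong[OF ST, of x], of z] by (auto simp: refl_graph_def)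
  have "p (p x) \<noteq> x" "p (p x) \<noteq> p x"
    using no_2_cycle x(1) inj by (auto dest: injD)
  then show not_T: "\<not> T (f (p x)) (p (p x))"
    using ST_iff[of x "p (p x)"] x(2) by blast
  obtain y where y: "S (p x) y" "T y (p (p x))"
    using ST_iff[of "p x" "p (p x)"] by blast
  obtain w where w: "y = f w"
    using surjD[OF surj] by blast
  have "w = p x \<or> w = p (p x)" using S_f y(1) w by blast
  moreover have "w \<noteq> p x" using not_T y(2) w by blast
  ultimately show "S (p x) (f (p (p x)))" using y(1) w by blast
qed

text \<open>Let S OO T = refl_graph p with neither factor a permutation, and match x with f x
  such that S x (f x) and T (f x) x. Some point of the cycle is S-related to the partner of
  its successor; this propagates around the cycle, and then forbids every T-step to a
  successor, which would make T a permutation.\<close>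
lemma refl_graph_irreducible:
  fixes p :: "'x::finite \<Rightarrow> 'x"
  assumes inj: "inj p" and no_2_cycle: "\<And>x. p (p x) = x \<Longrightarrow> p x = x"
    and cyclic: "cyclic_on p {x. p x \<noteq> x}"
  shows "irreducible_elem rel_monoid (refl_graph p)"
proof -
  let ?M = "{x. p x \<noteq> x}"
  obtain x where "p x \<noteq> x" using cyclic unfolding cyclic_on_alldef by blast
  then have not_unit: "refl_graph p \<notin> Units rel_monoid"
    by (simp add: Units_rel_monoid refl_graph_not_perm_rel)
  have "perm_rel S \<or> perm_rel T" if ST: "S OO T = refl_graph p" for S T :: "'x \<Rightarrow> 'x \<Rightarrow> bool"
  proof (rule ccontr)
    assume not_perm: "\<not> (perm_rel S \<or> perm_rel T)"
    obtain f where bij: "bij f" and f: "\<And>x. S x (f x)" "\<And>x. T (f x) x"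
      and S_f: "\<And>x w. S x (f w) \<Longrightarrow> w = x \<or> w = p x"
      and T_f: "\<And>w z. T (f w) z \<Longrightarrow> z = w \<or> z = p w"
      using relcompp_refl_graph_matching[OF no_2_cycle ST] by blast
    note step = refl_graph_factor_step[OF inj no_2_cycle ST bij_is_surj[OF bij] S_f]
    obtain x0 where x0: "x0 \<in> ?M" "S x0 (f (p x0))"
    proof -
      have "S \<noteq> (\<lambda>x y. y = f x)"
        using not_perm bij unfolding perm_rel_def by blast
      then obtain x y where xy: "S x y" "y \<noteq> f x"
        using f(1) by (auto simp: fun_eq_iff)
      obtain w where w: "y = f w"
        using surjD[OF bij_is_surj[OF bij]] by blast
      then have "w = p x" "w \<noteq> x" using S_f xy by blast+
      then show thesis using that xy w by simp
    qed
    have S_shift: "S x (f (p x))" if "x \<in> ?M" for x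
      using cyclic_on_induct[where Q = "\<lambda>x. S x (f (p x))", OF cyclic x0] step(2) that by blast
    have "T \<noteq> (\<lambda>x y. y = f x)\<inverse>\<inverse>"
      using not_perm bij perm_rel_conversep unfolding perm_rel_def by blast
    then obtain w z where wz: "T (f w) z" "z \<noteq> w"
      using f(2) surjD[OF bij_is_surj[OF bij]] by (auto simp: fun_eq_iff) metis
    then have "z = p w" "w \<in> ?M" using T_f by auto
    obtain x where "w = p x"
      using surjD[OF finite_UNIV_inj_surj[OF finite_UNIV inj]] by blast
    with \<open>w \<in> ?M\<close> have "p x \<noteq> x" by auto
    then show False
      using step(1) S_shift wz(1) \<open>z = p w\<close> \<open>w = p x\<close> by blast
  qed
  then show ?thesis
    using not_unit by (auto simp: irreducible_elem_def Units_rel_monoid)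
qed

lemma card_support_le_if_unit_orbit:
  fixes p q :: "'x::finite \<Rightarrow> 'x"
  assumes "refl_graph q \<in> unit_orbit rel_monoid (refl_graph p)"
  shows "card {x. q x \<noteq> x} \<le> card {x. p x \<noteq> x}"
proof -
  obtain u v where "u \<in> Units rel_monoid" "v \<in> Units rel_monoid"
    and q: "refl_graph q = u OO refl_graph p OO v"
    using assms unfolding unit_orbit_def by (auto simp: relcompp_assoc)
  then obtain g h where "bij g" "u = (\<lambda>x y. y = g x)" "v = (\<lambda>x y. y = h x)"
    unfolding Units_rel_monoid perm_rel_def by blast
  with q have q: "refl_graph q = (\<lambda>x y. y = g x) OO refl_graph p OO (\<lambda>x y. y = h x)"
    by simp
  have q_iff: "z = x \<or> z = q x \<longleftrightarrow> z = h (g x) \<or> z = h (p (g x))" for x z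
    using fun_cong[OF fun_cong[OF q, of x], of z] by (auto simp: refl_graph_def)
  have "p (g x) \<noteq> g x" if "q x \<noteq> x" for x
  proof
    assume "p (g x) = g x"
    then have "x = h (g x)" "q x = h (g x)"
      using q_iff[of x x] q_iff[of "q x" x] by simp_all
    then show False using that by simp
  qed
  then have "g ` {x. q x \<noteq> x} \<subseteq> {x. p x \<noteq> x}"
    by blast
  moreover have "inj_on g {x. q x \<noteq> x}"
    using bij_is_inj[OF \<open>bij g\<close>] by (rule inj_on_subset) simp
  ultimately show ?thesis
    by (intro card_inj_on_le) simp_all
qed

lemma add_mod_neq:
  fixes i k l :: nat
  assumes "i < l" "0 < k" "k < l"
  shows "(k + i) mod l \<noteq> i"
proof (cases "k + i < l")
  case False
  moreover have "k + i - l < l" using assms by linarith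
  ultimately have "(k + i) mod l = k + i - l" by (simp add: le_mod_geq)
  then show ?thesis using False assms by linarith
qed (use assms in simp)

lemma cycle_of_list_funpow_nth:
  assumes "distinct cs" "i < length cs"
  shows "(cycle_of_list cs ^^ n) (cs ! i) = cs ! ((n + i) mod length cs)"
proof -
  have "(cycle_of_list cs ^^ n) (cs ! i) = map (cycle_of_list cs ^^ n) cs ! i"
    using assms(2) by (rule nth_map[symmetric])
  also have "\<dots> = rotate n cs ! i"
    by (simp only: cyclic_rotation[OF assms(1)])
  also have "\<dots> = cs ! ((n + i) mod length cs)"
    using assms(2) by (rule nth_rotate)
  finally show ?thesis .
qed

lemma support_cycle_of_list:
  assumes "distinct cs" "2 \<le> length cs"
  shows "{x. cycle_of_list cs x \<noteq> x} = set cs"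
proof (intro equalityI subsetI)
  fix x
  assume "x \<in> set cs"
  then obtain i where i: "i < length cs" "x = cs ! i" by (auto simp: in_set_conv_nth)
  have "cycle_of_list cs x = cs ! ((1 + i) mod length cs)"
    using cycle_of_list_funpow_nth[OF assms(1) i(1), of 1] i(2) by simp
  moreover have "(1 + i) mod length cs \<noteq> i"
    using i(1) assms(2) by (intro add_mod_neq) auto
  moreover have "(1 + i) mod length cs < length cs"
    using i(1) by (intro mod_less_divisor) linarith
  ultimately show "x \<in> {x. cycle_of_list cs x \<noteq> x}"
    using i assms(1) by (simp add: nth_eq_iff_index_eq)
next
  fix x
  assume "x \<in> {x. cycle_of_list cs x \<noteq> x}"
  then show "x \<in> set cs" using id_outside_supp by fastforce
qed

lemma cyclic_on_cycle_of_list: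
  assumes "distinct cs" "2 \<le> length cs"
  shows "cyclic_on (cycle_of_list cs) (set cs)"
proof (rule cyclic_on_singleI)
  show "cs ! 0 \<in> set cs" using assms(2) by (intro nth_mem) linarith
  have "(cycle_of_list cs ^^ n) (cs ! 0) = cs ! (n mod length cs)" for n
    using cycle_of_list_funpow_nth[OF assms(1), of 0 n] assms(2) by fastforce
  then have "orbit (cycle_of_list cs) (cs ! 0) = {cs ! (n mod length cs) | n. 0 < n}"
    unfolding orbit_altdef by simp
  also have "\<dots> = set cs"
  proof (intro equalityI subsetI)
    fix x
    assume "x \<in> set cs"
    then obtain i where "i < length cs" "x = cs ! i" by (auto simp: in_set_conv_nth)
    then have "x = cs ! ((i + length cs) mod length cs)" "0 < i + length cs" by auto
    then show "x \<in> {cs ! (n mod length cs) | n. 0 < n}" by blast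
  qed (use assms(2) in \<open>auto intro!: nth_mem mod_less_divisor\<close>)
  finally show "set cs = orbit (cycle_of_list cs) (cs ! 0)" ..
qed

lemma cycle_of_list_no_2_cycle:
  assumes "distinct cs" "3 \<le> length cs" "cycle_of_list cs (cycle_of_list cs x) = x"
  shows "cycle_of_list cs x = x"
proof (cases "x \<in> set cs")
  case True
  then obtain i where i: "i < length cs" "x = cs ! i" by (auto simp: in_set_conv_nth)
  have "cs ! ((2 + i) mod length cs) = cs ! i"
    using cycle_of_list_funpow_nth[OF assms(1) i(1), of 2] assms(3) i(2)
    by (simp add: numeral_2_eq_2)
  moreover have "(2 + i) mod length cs < length cs"
    using i(1) by (intro mod_less_divisor) linarith
  ultimately have "(2 + i) mod length cs = i"
    using i(1) assms(1) by (simp add: nth_eq_iff_index_eq)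
  moreover have "(2 + i) mod length cs \<noteq> i"
    using i(1) assms(2) by (intro add_mod_neq) auto
  ultimately show ?thesis by contradiction
qed (simp add: id_outside_supp)

lemma irreducible_refl_graph_cycle_of_list:
  fixes cs :: "'x::finite list"
  assumes "distinct cs" "3 \<le> length cs"
  shows "irreducible_elem rel_monoid (refl_graph (cycle_of_list cs))"
proof (rule refl_graph_irreducible)
  show "inj (cycle_of_list cs)"
    by (rule bij_is_inj[OF permutation_bijective[OF permutation_of_cycle]])
  show "cycle_of_list cs (cycle_of_list cs x) = x \<Longrightarrow> cycle_of_list cs x = x" for x
    by (rule cycle_of_list_no_2_cycle[OF assms])
  have "{x. cycle_of_list cs x \<noteq> x} = set cs"
    using assms by (intro support_cycle_of_list) auto
  then show "cyclic_on (cycle_of_list cs) {x. cycle_of_list cs x \<noteq> x}"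
    using cyclic_on_cycle_of_list[OF assms(1)] assms(2) by simp
qed

lemma refl_graph_cycle_of_list_not_in_unit_orbit:
  fixes cs ds :: "'x::finite list"
  assumes "distinct cs" "2 \<le> length cs" "distinct ds" "2 \<le> length ds" "length cs \<noteq> length ds"
  shows "refl_graph (cycle_of_list cs) \<notin> unit_orbit rel_monoid (refl_graph (cycle_of_list ds))"
proof
  assume cs_ds: "refl_graph (cycle_of_list cs) \<in> unit_orbit rel_monoid (refl_graph (cycle_of_list ds))"
  then have "refl_graph (cycle_of_list ds) \<in> unit_orbit rel_monoid (refl_graph (cycle_of_list cs))"
    using monoid.unit_orbit_sym[OF monoid_rel_monoid] by simp
  moreover have "card {x. cycle_of_list cs x \<noteq> x} = length cs"
    "card {x. cycle_of_list ds x \<noteq> x} = length ds"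
    using assms by (simp_all add: support_cycle_of_list distinct_card)
  ultimately show False
    using card_support_le_if_unit_orbit[OF cs_ds] card_support_le_if_unit_orbit assms(5) by fastforce
qed

section \<open>Atoms of a distributive lattice\<close>

definition is_atom :: "'a::order_bot \<Rightarrow> bool" where
  "is_atom a \<longleftrightarrow> a \<noteq> bot \<and> (\<forall>x \<le> a. x = bot \<or> x = a)"

lemma finite_exists_atom:
  assumes "1 < card (UNIV :: 'a::{finite, order_bot} set)"
  shows "\<exists>a::'a. is_atom a"
proof -
  have "{x::'a. x \<noteq> bot} \<noteq> {}"
  proof
    assume "{x::'a. x \<noteq> bot} = {}"
    then have "(UNIV :: 'a set) = {bot}" by auto
    then have "card (UNIV :: 'a set) = card {bot :: 'a}" by (rule arg_cong)
    then show False using assms by simp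
  qed
  then obtain a where a: "a \<in> {x::'a. x \<noteq> bot}"
    and minimal: "\<And>b. b \<in> {x. x \<noteq> bot} \<Longrightarrow> b \<le> a \<Longrightarrow> a = b"
    using finite_has_minimal[of "{x::'a. x \<noteq> bot}"] by auto
  have "is_atom a"
    unfolding is_atom_def using a minimal by fastforce
  then show ?thesis ..
qed

lemma atom_le_sup_iff:
  fixes a :: "'a::{distrib_lattice, order_bot}"
  assumes "is_atom a"
  shows "a \<le> sup x y \<longleftrightarrow> a \<le> x \<or> a \<le> y"
proof
  assume "a \<le> sup x y"
  then have "a = inf a (sup x y)" by (simp add: inf.absorb1)
  also have "\<dots> = sup (inf a x) (inf a y)" by (rule inf_sup_distrib1)
  finally have a_eq: "a = sup (inf a x) (inf a y)" .
  have "inf a x = bot \<or> inf a x = a"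
    using assms unfolding is_atom_def by simp
  then show "a \<le> x \<or> a \<le> y"
  proof
    assume "inf a x = bot"
    then have "a = inf a y" using a_eq by (simp add: sup_absorb2)
    then show ?thesis by (simp add: inf.absorb_iff1)
  qed (simp add: inf.absorb_iff1)
qed (auto intro: le_supI1 le_supI2)

lemma atom_le_Sup_fin_iff:
  fixes a :: "'a::{distrib_lattice, order_bot}"
  assumes "is_atom a" "finite A" "A \<noteq> {}"
  shows "a \<le> Sup_fin A \<longleftrightarrow> (\<exists>x\<in>A. a \<le> x)"
  using assms(2,3)
  by (induction A rule: finite_ne_induct) (simp_all add: atom_le_sup_iff[OF assms(1)])

definition atom_rel :: "'l::{distrib_lattice, bounded_lattice} \<Rightarrow> ('x, 'l) corr \<Rightarrow> 'x \<Rightarrow> 'x \<Rightarrow> bool" where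
  "atom_rel a R = (\<lambda>x y. a \<le> R x y)"

lemma atom_rel_corr_mult:
  fixes R S :: "('x::finite, 'l::{distrib_lattice, bounded_lattice}) corr"
  assumes "is_atom a"
  shows "atom_rel a (corr_mult R S) = atom_rel a R OO atom_rel a S"
proof (intro ext)
  fix x z
  have "a \<le> corr_mult R S x z \<longleftrightarrow> (\<exists>v \<in> {inf (R x y) (S y z) | y. True}. a \<le> v)"
    unfolding corr_mult_def by (rule atom_le_Sup_fin_iff[OF assms]) (auto simp: full_SetCompr_eq)
  then show "atom_rel a (corr_mult R S) x z = (atom_rel a R OO atom_rel a S) x z"
    by (auto simp: atom_rel_def)
qed

lemma atom_rel_corr_one:
  "is_atom a \<Longrightarrow> atom_rel a (corr_one :: ('x::finite, 'l::{distrib_lattice, bounded_lattice}) corr) = (=)"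
  by (auto simp: atom_rel_def corr_one_def is_atom_def fun_eq_iff bot_unique)

lemma atom_rel_indicator:
  fixes a :: "'l::{distrib_lattice, bounded_lattice}"
  shows "is_atom a \<Longrightarrow> atom_rel a (\<lambda>x y. if r x y then Orderings.top else bot) = r"
  by (auto simp: atom_rel_def is_atom_def fun_eq_iff bot_unique)

section \<open>Matrices of the Kronecker module\<close>

(* On k^(2n+1) = k^n + k^(n+1), the matrices for d = n and d = n + 1 send e_j (j < n) to e_(j+n)
   and to e_(j+n+1): the two arrows of the indecomposable Kronecker module of dimension vector
   (n, n+1). *)
definition kronecker_arrow :: "nat \<Rightarrow> nat \<Rightarrow> 'a::{zero, one} mat" where
  "kronecker_arrow n d = mat (2*n+1) (2*n+1) (\<lambda>(i, j). if j < n \<and> i = j + d then 1 else 0)"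

lemma kronecker_arrow_carrier [simp]: "kronecker_arrow n d \<in> carrier_mat (2*n+1) (2*n+1)"
  by (simp add: kronecker_arrow_def)

lemma dim_kronecker_arrow [simp]:
  "dim_row (kronecker_arrow n d) = 2*n+1" "dim_col (kronecker_arrow n d) = 2*n+1"
  by (simp_all add: kronecker_arrow_def)

lemma kronecker_arrow_index [simp]:
  "i < 2*n+1 \<Longrightarrow> j < 2*n+1 \<Longrightarrow> kronecker_arrow n d $$ (i, j) = (if j < n \<and> i = j + d then 1 else 0)"
  by (simp add: kronecker_arrow_def)

lemma mult_kronecker_arrow_index:
  fixes X :: "'a::semiring_1 mat"
  assumes "X \<in> carrier_mat (2*n+1) (2*n+1)" "i < 2*n+1" "j < 2*n+1" "d \<le> n + 1"
  shows "(X * kronecker_arrow n d) $$ (i, j) = (if j < n then X $$ (i, j + d) else 0)"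
proof -
  have "(X * kronecker_arrow n d) $$ (i, j)
      = (\<Sum>k\<in>{0..<2*n+1}. X $$ (i, k) * (if j < n \<and> k = j + d then 1 else 0))"
    using assms by (simp add: kronecker_arrow_def scalar_prod_def)
  also have "\<dots> = (\<Sum>k\<in>{0..<2*n+1}. if k = j + d then (if j < n then X $$ (i, k) else 0) else 0)"
    by (rule sum.cong) auto
  also have "\<dots> = (if j < n then X $$ (i, j + d) else 0)"
    using assms(4) by (simp add: sum.delta')
  finally show ?thesis .
qed

lemma kronecker_arrow_mult_index:
  fixes X :: "'a::semiring_1 mat"
  assumes "X \<in> carrier_mat (2*n+1) (2*n+1)" "i < 2*n+1" "j < 2*n+1"
  shows "(kronecker_arrow n d * X) $$ (i, j) = (if d \<le> i \<and> i < n + d then X $$ (i - d, j) else 0)"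
proof -
  have "(kronecker_arrow n d * X) $$ (i, j)
      = (\<Sum>k\<in>{0..<2*n+1}. (if k < n \<and> i = k + d then 1 else 0) * X $$ (k, j))"
    using assms by (simp add: kronecker_arrow_def scalar_prod_def)
  also have "\<dots> = (\<Sum>k\<in>{0..<2*n+1}. if k = i - d then (if d \<le> i \<and> i < n + d then X $$ (k, j) else 0) else 0)"
    by (rule sum.cong) auto
  also have "\<dots> = (if d \<le> i \<and> i < n + d then X $$ (i - d, j) else 0)"
    using assms(2) by (auto simp: sum.delta')
  finally show ?thesis .
qed

lemma kronecker_arrow_mult_kronecker_arrow:
  assumes "n \<le> e"
  shows "kronecker_arrow n d * kronecker_arrow n e = (0\<^sub>m (2*n+1) (2*n+1) :: 'a::semiring_1 mat)"
proof (rule eq_matI)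
  fix i j
  assume "i < dim_row (0\<^sub>m (2*n+1) (2*n+1) :: 'a mat)" "j < dim_col (0\<^sub>m (2*n+1) (2*n+1) :: 'a mat)"
  then have ij: "i < 2*n+1" "j < 2*n+1" by simp_all
  have "(kronecker_arrow n d * kronecker_arrow n e) $$ (i, j)
      = (if d \<le> i \<and> i < n + d then kronecker_arrow n e $$ (i - d, j) else (0::'a))"
    by (rule kronecker_arrow_mult_index[OF kronecker_arrow_carrier ij])
  also have "\<dots> = 0"
    using kronecker_arrow_index[of "i - d" n j e] ij assms by auto
  finally show "(kronecker_arrow n d * kronecker_arrow n e) $$ (i, j) = (0\<^sub>m (2*n+1) (2*n+1) :: 'a mat) $$ (i, j)"
    using ij by simp
qed (simp_all add: kronecker_arrow_def)

lemma shift_invariant_diagonal: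
  fixes Z :: "nat \<Rightarrow> nat \<Rightarrow> 'a::zero"
  assumes shift: "\<And>r s. Suc r < n \<Longrightarrow> Suc s < n \<Longrightarrow> Z (Suc r) (Suc s) = Z r s"
    and first_row: "\<And>s. 0 < s \<Longrightarrow> s < n \<Longrightarrow> Z 0 s = 0"
    and last_row: "\<And>s. Suc s < n \<Longrightarrow> Z (n - 1) s = 0"
    and rs: "r < n" "s < n"
  shows "Z r s = (if r = s then Z 0 0 else 0)"
proof -
  have shift_by: "Z (r + t) (s + t) = Z r s" if "r + t < n" "s + t < n" for r s t
    using that by (induction t) (simp_all add: shift)
  consider "r < s" | "r = s" | "s < r" by linarith
  then show ?thesis
  proof cases
    case 1
    then have "Z r s = Z 0 (s - r)" using shift_by[of 0 r "s - r"] rs by simp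
    then show ?thesis using 1 first_row rs by simp
  next
    case 2
    then show ?thesis using shift_by[of 0 r 0] rs by simp
  next
    case 3
    then have "Z r s = Z (n - 1) (s + (n - 1 - r))" using shift_by[of r "n - 1 - r" s] rs by simp
    then show ?thesis using 3 last_row rs by simp
  qed
qed

lemma commute_kronecker_arrows_blocks:
  fixes X :: "'a::semiring_1 mat"
  assumes X: "X \<in> carrier_mat (2*n+1) (2*n+1)"
    and A: "X * kronecker_arrow n n = kronecker_arrow n n * X"
    and B: "X * kronecker_arrow n (n+1) = kronecker_arrow n (n+1) * X"
  shows "\<And>r j. r < n \<Longrightarrow> n \<le> j \<Longrightarrow> j < 2*n+1 \<Longrightarrow> X $$ (r, j) = 0"
    and "\<And>r s. r < n \<Longrightarrow> s < n \<Longrightarrow> X $$ (n + r, n + s) = X $$ (r, s)"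
    and "\<And>r s. r < n \<Longrightarrow> s < n \<Longrightarrow> X $$ (n + r + 1, n + s + 1) = X $$ (r, s)"
    and "\<And>s. s < n \<Longrightarrow> X $$ (2*n, n + s) = 0"
    and "\<And>s. s < n \<Longrightarrow> X $$ (n, n + s + 1) = 0"
proof -
  have eA: "(if j < n then X $$ (i, j + n) else 0) = (if n \<le> i \<and> i < n + n then X $$ (i - n, j) else 0)"
    if "i < 2*n+1" "j < 2*n+1" for i j
    using arg_cong[OF A, of "\<lambda>M. M $$ (i, j)"]
    unfolding mult_kronecker_arrow_index[OF X that le_add1] kronecker_arrow_mult_index[OF X that] .
  have eB: "(if j < n then X $$ (i, j + (n + 1)) else 0)
      = (if n + 1 \<le> i \<and> i < n + (n + 1) then X $$ (i - (n + 1), j) else 0)"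
    if "i < 2*n+1" "j < 2*n+1" for i j
    using arg_cong[OF B, of "\<lambda>M. M $$ (i, j)"]
    unfolding mult_kronecker_arrow_index[OF X that order_refl] kronecker_arrow_mult_index[OF X that] .
  show "X $$ (r, j) = 0" if "r < n" "n \<le> j" "j < 2*n+1" for r j
    using eA[of "r + n" j] that by simp
  show "X $$ (n + r, n + s) = X $$ (r, s)" if "r < n" "s < n" for r s
    using eA[of "n + r" s] that by (simp add: add.commute)
  show "X $$ (n + r + 1, n + s + 1) = X $$ (r, s)" if "r < n" "s < n" for r s
    using eB[of "n + r + 1" s] that by (simp add: add.commute)
  show "X $$ (2*n, n + s) = 0" if "s < n" for s
    using eA[of "2*n" s] that by (simp add: add.commute)
  show "X $$ (n, n + s + 1) = 0" if "s < n" for s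
    using eB[of n s] that by (simp add: add.commute)
qed

lemma commute_kronecker_arrows_upper_left:
  fixes X :: "'a::semiring_1 mat"
  assumes X: "X \<in> carrier_mat (2*n+1) (2*n+1)" and n: "0 < n"
    and A: "X * kronecker_arrow n n = kronecker_arrow n n * X"
    and B: "X * kronecker_arrow n (n+1) = kronecker_arrow n (n+1) * X"
    and rs: "r < n" "s < n"
  shows "X $$ (r, s) = (if r = s then X $$ (0, 0) else 0)"
proof (rule shift_invariant_diagonal[of n "\<lambda>r s. X $$ (r, s)", OF _ _ _ rs])
  note blocks = commute_kronecker_arrows_blocks[OF X A B]
  show "X $$ (Suc r, Suc s) = X $$ (r, s)" if "Suc r < n" "Suc s < n" for r s
    using blocks(2)[of "Suc r" "Suc s"] blocks(3)[of r s] that by simp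
  show "X $$ (0, s) = 0" if "0 < s" "s < n" for s
    using blocks(2)[of 0 s] blocks(5)[of "s - 1"] that by simp
  show "X $$ (n - 1, s) = 0" if "Suc s < n" for s
    using blocks(3)[of "n - 1" s] blocks(4)[of "Suc s"] that n by (simp add: mult_2)
qed

lemma commute_kronecker_arrows_entry:
  fixes X :: "'a::semiring_1 mat"
  assumes X: "X \<in> carrier_mat (2*n+1) (2*n+1)" and n: "0 < n"
    and A: "X * kronecker_arrow n n = kronecker_arrow n n * X"
    and B: "X * kronecker_arrow n (n+1) = kronecker_arrow n (n+1) * X"
    and ij: "i < 2*n+1" "j < 2*n+1" "\<not> (n \<le> i \<and> j < n)"
  shows "X $$ (i, j) = (if i = j then X $$ (0, 0) else 0)"
proof -
  note blocks = commute_kronecker_arrows_blocks[OF X A B]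
  note upper_left = commute_kronecker_arrows_upper_left[OF X n A B]
  have lower_right: "X $$ (n + r, n + s) = (if r = s then X $$ (0, 0) else 0)"
    if rs: "r \<le> n" "s \<le> n" for r s
  proof -
    consider "0 < r" "0 < s" | "r = 0" "s < n" | "r = 0" "s = n" | "s = 0" "r < n" | "s = 0" "r = n"
      using rs by (metis gr0I le_neq_implies_less)
    then show ?thesis
    proof cases
      case 1
      then show ?thesis
        using blocks(3)[of "r - 1" "s - 1"] upper_left[of "r - 1" "s - 1"] rs by auto
    next
      case 2
      then show ?thesis using blocks(2)[of 0 s] upper_left[of 0 s] n by simp
    next
      case 3
      then show ?thesis using blocks(5)[of "n - 1"] n by simp
    next
      case 4
      then show ?thesis using blocks(2)[of r 0] upper_left[of r 0] n by simp
    next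
      case 5
      then show ?thesis using blocks(4)[of 0] n by (simp add: mult_2)
    qed
  qed
  consider "i < n" "j < n" | "i < n" "n \<le> j" | "n \<le> i" "n \<le> j"
    using ij(3) by linarith
  then show ?thesis
  proof cases
    case 1
    then show ?thesis by (rule upper_left)
  next
    case 2
    then show ?thesis using blocks(1) ij by auto
  next
    case 3
    moreover have "i - n = j - n \<longleftrightarrow> i = j" using 3 by linarith
    ultimately show ?thesis using lower_right[of "i - n" "j - n"] ij by simp
  qed
qed

lemma idempotent_scalar_off_lower_left:
  fixes X :: "'a::idom mat"
  assumes X: "X \<in> carrier_mat m m" and m: "0 < m"
    and entries: "\<And>i j. i < m \<Longrightarrow> j < m \<Longrightarrow> \<not> (n \<le> i \<and> j < n) \<Longrightarrow> X $$ (i, j) = (if i = j then c else 0)"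
    and idem: "X * X = X"
  shows "X = 0\<^sub>m m m \<or> X = 1\<^sub>m m"
proof -
  have square: "X $$ (i, j) = (\<Sum>k\<in>{0..<m}. X $$ (i, k) * X $$ (k, j))" if "i < m" "j < m" for i j
    using arg_cong[OF idem, of "\<lambda>M. M $$ (i, j)"] X that by (simp add: scalar_prod_def)
  have row0: "X $$ (0, k) = (if k = 0 then c else 0)" if "k < m" for k
    using entries[of 0 k] m that by (cases "n = 0") auto
  have "c = X $$ (0, 0)"
    using row0[OF m] by simp
  also have "\<dots> = (\<Sum>k\<in>{0..<m}. if k = 0 then c * c else 0)"
    unfolding square[OF m m] by (rule sum.cong) (auto simp: row0 m)
  finally have "c * c = c * 1"
    using m by simp
  then have c: "c = 0 \<or> c = 1"
    by (simp only: mult_cancel_left)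
  have lower_left: "X $$ (i, j) = 0" if "n \<le> i" "i < m" "j < n" for i j
  proof -
    have "j < m" using that by linarith
    have "X $$ (i, j) = (\<Sum>k\<in>{0..<m}. X $$ (i, k) * X $$ (k, j))"
      using square \<open>i < m\<close> \<open>j < m\<close> .
    also have "\<dots> = (\<Sum>k\<in>{0..<m}. (if k = j then c * X $$ (i, j) else 0) + (if k = i then c * X $$ (i, j) else 0))"
    proof (rule sum.cong)
      fix k
      assume "k \<in> {0..<m}"
      then show "X $$ (i, k) * X $$ (k, j) = (if k = j then c * X $$ (i, j) else 0) + (if k = i then c * X $$ (i, j) else 0)"
        using entries[of k j] entries[of i k] that \<open>j < m\<close> by (cases "k < n") auto
    qed simp
    also have "\<dots> = c * X $$ (i, j) + c * X $$ (i, j)"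
      using that \<open>j < m\<close> by (simp add: sum.distrib)
    finally have eq: "X $$ (i, j) = c * X $$ (i, j) + c * X $$ (i, j)" .
    show ?thesis
      using c
    proof
      assume "c = 1"
      then have "X $$ (i, j) = X $$ (i, j) + X $$ (i, j)" using eq by (simp only: mult_1)
      then show ?thesis by (simp only: add_cancel_right_right)
    qed (use eq in simp)
  qed
  have "X $$ (i, j) = (if i = j then c else 0)" if "i < m" "j < m" for i j
    using entries[OF that] lower_left[OF _ that(1)] by (cases "n \<le> i \<and> j < n") auto
  then show ?thesis
    using c X by (auto intro!: eq_matI)
qed

section \<open>Representations\<close>

lemma mult_zero_smult_add_smult:
  fixes A B :: "'a::comm_ring_1 mat"
  assumes carrier: "A \<in> carrier_mat m m" "B \<in> carrier_mat m m"
    and zero: "A * A = 0\<^sub>m m m" "A * B = 0\<^sub>m m m" "B * A = 0\<^sub>m m m" "B * B = 0\<^sub>m m m"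
  shows "(a \<cdot>\<^sub>m A + b \<cdot>\<^sub>m B) * (c \<cdot>\<^sub>m A + d \<cdot>\<^sub>m B) = 0\<^sub>m m m"
proof -
  let ?W = "c \<cdot>\<^sub>m A + d \<cdot>\<^sub>m B"
  have W: "?W \<in> carrier_mat m m" using carrier by simp
  have "M * ?W = 0\<^sub>m m m" if "M \<in> {A, B}" for M
  proof -
    have M: "M \<in> carrier_mat m m" using that carrier by blast
    have "M * ?W = M * (c \<cdot>\<^sub>m A) + M * (d \<cdot>\<^sub>m B)"
      using M carrier by (intro mult_add_distrib_mat) auto
    also have "\<dots> = c \<cdot>\<^sub>m (M * A) + d \<cdot>\<^sub>m (M * B)"
      by (simp only: mult_smult_distrib[OF M carrier(1)] mult_smult_distrib[OF M carrier(2)])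
    finally show ?thesis using that zero by auto
  qed
  then have AW: "A * ?W = 0\<^sub>m m m" and BW: "B * ?W = 0\<^sub>m m m" by blast+
  have "(a \<cdot>\<^sub>m A + b \<cdot>\<^sub>m B) * ?W = (a \<cdot>\<^sub>m A) * ?W + (b \<cdot>\<^sub>m B) * ?W"
    using carrier W by (intro add_mult_distrib_mat) auto
  also have "\<dots> = a \<cdot>\<^sub>m (A * ?W) + b \<cdot>\<^sub>m (B * ?W)"
    by (simp only: mult_smult_assoc_mat[OF carrier(1) W] mult_smult_assoc_mat[OF carrier(2) W])
  finally show ?thesis by (simp add: AW BW)
qed

lemma smult_one_plus_mult:
  fixes Z W :: "'a::comm_ring_1 mat"
  assumes Z: "Z \<in> carrier_mat m m" and W: "W \<in> carrier_mat m m" and ZW: "Z * W = 0\<^sub>m m m"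
  shows "(p \<cdot>\<^sub>m 1\<^sub>m m + Z) * (q \<cdot>\<^sub>m 1\<^sub>m m + W) = (p * q) \<cdot>\<^sub>m 1\<^sub>m m + (q \<cdot>\<^sub>m Z + p \<cdot>\<^sub>m W)"
proof -
  have one: "p \<cdot>\<^sub>m 1\<^sub>m m \<in> carrier_mat m m" "q \<cdot>\<^sub>m 1\<^sub>m m \<in> carrier_mat m m" by simp_all
  have qW: "q \<cdot>\<^sub>m 1\<^sub>m m + W \<in> carrier_mat m m" using W by simp
  have "(p \<cdot>\<^sub>m 1\<^sub>m m + Z) * (q \<cdot>\<^sub>m 1\<^sub>m m + W)
      = p \<cdot>\<^sub>m 1\<^sub>m m * (q \<cdot>\<^sub>m 1\<^sub>m m + W) + Z * (q \<cdot>\<^sub>m 1\<^sub>m m + W)"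
    using one Z qW by (intro add_mult_distrib_mat) auto
  also have "p \<cdot>\<^sub>m 1\<^sub>m m * (q \<cdot>\<^sub>m 1\<^sub>m m + W) = p \<cdot>\<^sub>m (q \<cdot>\<^sub>m 1\<^sub>m m + W)"
    by (simp add: mult_smult_assoc_mat[OF one_carrier_mat qW] left_mult_one_mat[OF qW])
  also have "Z * (q \<cdot>\<^sub>m 1\<^sub>m m + W) = Z * (q \<cdot>\<^sub>m 1\<^sub>m m) + Z * W"
    using one Z W by (intro mult_add_distrib_mat) auto
  also have "Z * (q \<cdot>\<^sub>m 1\<^sub>m m) = q \<cdot>\<^sub>m Z"
    using Z by (simp add: mult_smult_distrib[OF Z one_carrier_mat])
  finally show ?thesis
    using Z W ZW by (auto intro!: eq_matI simp: algebra_simps)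
qed

lemma square_zero_pair_mult:
  fixes A B :: "'a::comm_ring_1 mat"
  assumes carrier: "A \<in> carrier_mat m m" "B \<in> carrier_mat m m"
    and zero: "A * A = 0\<^sub>m m m" "A * B = 0\<^sub>m m m" "B * A = 0\<^sub>m m m" "B * B = 0\<^sub>m m m"
  shows "(x \<cdot>\<^sub>m 1\<^sub>m m + (u \<cdot>\<^sub>m A + s \<cdot>\<^sub>m B)) * (y \<cdot>\<^sub>m 1\<^sub>m m + (v \<cdot>\<^sub>m A + t \<cdot>\<^sub>m B))
    = (x * y) \<cdot>\<^sub>m 1\<^sub>m m + ((u * y + x * v) \<cdot>\<^sub>m A + (s * y + x * t) \<cdot>\<^sub>m B)"
proof -
  have "(x \<cdot>\<^sub>m 1\<^sub>m m + (u \<cdot>\<^sub>m A + s \<cdot>\<^sub>m B)) * (y \<cdot>\<^sub>m 1\<^sub>m m + (v \<cdot>\<^sub>m A + t \<cdot>\<^sub>m B))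
      = (x * y) \<cdot>\<^sub>m 1\<^sub>m m + (y \<cdot>\<^sub>m (u \<cdot>\<^sub>m A + s \<cdot>\<^sub>m B) + x \<cdot>\<^sub>m (v \<cdot>\<^sub>m A + t \<cdot>\<^sub>m B))"
    using carrier by (intro smult_one_plus_mult mult_zero_smult_add_smult zero) auto
  then show ?thesis
    using carrier by (auto intro!: eq_matI simp: algebra_simps)
qed

definition orbit_rep :: "('a, 'b) monoid_scheme \<Rightarrow> 'a \<Rightarrow> 'a \<Rightarrow> nat \<Rightarrow> 'a \<Rightarrow> 'k::comm_ring_1 mat" where
  "orbit_rep G p q n x = of_bool (x \<in> Units G) \<cdot>\<^sub>m 1\<^sub>m (2*n+1)
     + (of_bool (x \<in> unit_orbit G p) \<cdot>\<^sub>m kronecker_arrow n n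
        + of_bool (x \<in> unit_orbit G q) \<cdot>\<^sub>m kronecker_arrow n (n+1))"

lemma orbit_rep_carrier: "orbit_rep G p q n x \<in> carrier_mat (2*n+1) (2*n+1)"
  unfolding orbit_rep_def by (intro add_carrier_mat smult_carrier_mat one_carrier_mat kronecker_arrow_carrier)

lemma (in dedekind_finite_monoid) orbit_rep_mult:
  assumes p: "irreducible_elem G p" and q: "irreducible_elem G q"
    and a: "a \<in> carrier G" and b: "b \<in> carrier G"
  shows "orbit_rep G p q n (a \<otimes> b) = orbit_rep G p q n a * orbit_rep G p q n b"
  unfolding orbit_rep_def of_bool_Units_mult[OF a b]
    of_bool_unit_orbit_mult[OF p a b] of_bool_unit_orbit_mult[OF q a b]
  by (rule square_zero_pair_mult[symmetric, OF kronecker_arrow_carrier kronecker_arrow_carrier])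
    (simp_all add: kronecker_arrow_mult_kronecker_arrow)

lemma (in monoid) orbit_rep_one:
  assumes "irreducible_elem G p" "irreducible_elem G q"
  shows "orbit_rep G p q n \<one> = 1\<^sub>m (2*n+1)"
  using unit_orbit_disjoint_Units[OF assms(1)] unit_orbit_disjoint_Units[OF assms(2)]
  by (auto intro!: eq_matI simp: orbit_rep_def)

lemma (in monoid) orbit_rep_left:
  assumes "irreducible_elem G p" "p \<notin> unit_orbit G q"
  shows "orbit_rep G p q n p = kronecker_arrow n n"
  using assms unit_orbit_self[of p] unit_orbit_disjoint_Units[OF assms(1)]
  by (auto intro!: eq_matI simp: orbit_rep_def irreducible_elem_def)

lemma (in monoid) orbit_rep_right:
  assumes "irreducible_elem G q" "q \<notin> unit_orbit G p"
  shows "orbit_rep G p q n q = kronecker_arrow n (n+1)"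
  using assms unit_orbit_self[of q] unit_orbit_disjoint_Units[OF assms(1)]
  by (auto intro!: eq_matI simp: orbit_rep_def irreducible_elem_def)

lemma commuting_idempotent_conjugate:
  fixes P Q E :: "'a::comm_ring_1 mat"
  assumes P: "P \<in> carrier_mat m m" and Q: "Q \<in> carrier_mat m m"
    and PQ: "P * Q = 1\<^sub>m m" and QP: "Q * P = 1\<^sub>m m"
    and A: "\<And>a. A a \<in> carrier_mat m m" and B: "\<And>a. B a \<in> carrier_mat m m"
    and intertwine: "\<And>a. P * A a = B a * P"
    and E: "E \<in> carrier_mat m m" and E_comm: "\<And>a. E * B a = B a * E" and E_idem: "E * E = E"
  shows "Q * E * P \<in> carrier_mat m m" "Q * E * P * A a = A a * (Q * E * P)"
    "Q * E * P * (Q * E * P) = Q * E * P" "P * (Q * E * P) * Q = E"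
proof -
  have assoc: "X * Y * Z = X * (Y * Z)"
    if "X \<in> carrier_mat m m" "Y \<in> carrier_mat m m" "Z \<in> carrier_mat m m" for X Y Z :: "'a mat"
    using that by (rule assoc_mult_mat)
  have cancel: "P * (Q * X) = X" "Q * (P * X) = X" if "X \<in> carrier_mat m m" for X
    using that P Q by (simp_all flip: assoc add: PQ QP)
  have shift: "P * (A a * X) = B a * (P * X)" "E * (B a * X) = B a * (E * X)" "E * (E * X) = E * X"
    if "X \<in> carrier_mat m m" for a X
    using that P A B E by (simp_all flip: assoc add: intertwine E_comm E_idem)
  have Q_shift: "Q * (B a * X) = A a * (Q * X)" if "X \<in> carrier_mat m m" for a X
  proof -
    have "Q * (B a * X) = Q * (B a * (P * (Q * X)))" using that by (simp add: cancel)
    also have "\<dots> = Q * (P * (A a * (Q * X)))" using that Q A by (simp add: shift)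
    also have "\<dots> = A a * (Q * X)" using that Q A by (intro cancel(2) mult_carrier_mat)
    finally show ?thesis .
  qed
  note carrier = P Q A B E
  show "Q * E * P \<in> carrier_mat m m" using carrier by simp
  show "Q * E * P * A a = A a * (Q * E * P)"
    using carrier by (simp add: assoc intertwine shift Q_shift)
  show "Q * E * P * (Q * E * P) = Q * E * P"
    using carrier by (simp add: assoc shift cancel)
  show "P * (Q * E * P) * Q = E"
    using carrier by (simp add: assoc cancel PQ)
qed

lemma invertible_matE:
  assumes "P \<in> carrier_mat m m" "invertible_mat P"
  obtains Q where "Q \<in> carrier_mat m m" "P * Q = 1\<^sub>m m" "Q * P = 1\<^sub>m m"
proof -
  obtain Q where PQ: "P * Q = 1\<^sub>m (dim_row P)" and QP: "Q * P = 1\<^sub>m (dim_row Q)"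
    using assms(2) unfolding invertible_mat_def inverts_mat_def by blast
  have "dim_col Q = m" using arg_cong[OF PQ, of dim_col] assms(1) by simp
  moreover have "dim_row Q = m" using arg_cong[OF QP, of dim_col] assms(1) by simp
  ultimately show thesis
    using that[of Q] PQ QP assms(1) by auto
qed

lemma block_diag_idempotent:
  fixes A D :: "'a::comm_ring_1 mat" and s1 s2 :: nat
  defines "E \<equiv> four_block_mat (1\<^sub>m s1) (0\<^sub>m s1 s2) (0\<^sub>m s2 s1) (0\<^sub>m s2 s2)"
  assumes A: "A \<in> carrier_mat s1 s1" and D: "D \<in> carrier_mat s2 s2"
  shows "E * four_block_mat A (0\<^sub>m s1 s2) (0\<^sub>m s2 s1) D = four_block_mat A (0\<^sub>m s1 s2) (0\<^sub>m s2 s1) D * E"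
    and "E * E = E"
proof -
  note blocks = one_carrier_mat zero_carrier_mat zero_carrier_mat zero_carrier_mat
  have "E * four_block_mat A (0\<^sub>m s1 s2) (0\<^sub>m s2 s1) D = four_block_mat A (0\<^sub>m s1 s2) (0\<^sub>m s2 s1) (0\<^sub>m s2 s2)"
    unfolding E_def using A D
    by (simp add: mult_four_block_mat[OF blocks A zero_carrier_mat zero_carrier_mat D])
  moreover have "four_block_mat A (0\<^sub>m s1 s2) (0\<^sub>m s2 s1) D * E = four_block_mat A (0\<^sub>m s1 s2) (0\<^sub>m s2 s1) (0\<^sub>m s2 s2)"
    unfolding E_def using A D
    by (simp add: mult_four_block_mat[OF A zero_carrier_mat zero_carrier_mat D blocks])
  ultimately show "E * four_block_mat A (0\<^sub>m s1 s2) (0\<^sub>m s2 s1) D = four_block_mat A (0\<^sub>m s1 s2) (0\<^sub>m s2 s1) D * E"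
    by simp
  show "E * E = E"
    unfolding E_def by (simp add: mult_four_block_mat[OF blocks blocks])
qed

lemma indecomposable_if_idempotents_trivial:
  fixes \<rho> :: "('x::finite, 'l::{distrib_lattice, bounded_lattice}) corr \<Rightarrow> 'k::field mat"
  assumes rep: "is_rep m \<rho>" and m: "0 < m"
    and trivial: "\<And>X. X \<in> carrier_mat m m \<Longrightarrow> (\<And>a. X * \<rho> a = \<rho> a * X) \<Longrightarrow> X * X = X
      \<Longrightarrow> X = 0\<^sub>m m m \<or> X = 1\<^sub>m m"
  shows "indecomposable (m, \<rho>)"
proof -
  have "\<not> rep_iso (m, \<rho>) (rep_sum (s1, \<sigma>1) (s2, \<sigma>2))"
    if reps: "is_rep s1 \<sigma>1" "is_rep s2 \<sigma>2" and pos: "0 < s1" "0 < s2"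
    for s1 s2 and \<sigma>1 \<sigma>2 :: "('x, 'l) corr \<Rightarrow> 'k mat"
  proof
    define \<sigma> where "\<sigma> a = four_block_mat (\<sigma>1 a) (0\<^sub>m s1 s2) (0\<^sub>m s2 s1) (\<sigma>2 a)" for a
    define E :: "'k mat" where "E = four_block_mat (1\<^sub>m s1) (0\<^sub>m s1 s2) (0\<^sub>m s2 s1) (0\<^sub>m s2 s2)"
    assume "rep_iso (m, \<rho>) (rep_sum (s1, \<sigma>1) (s2, \<sigma>2))"
    then obtain P where m_eq: "m = s1 + s2" and P: "P \<in> carrier_mat m m" "invertible_mat P"
      and intertwine: "\<And>a. P * \<rho> a = \<sigma> a * P"
      unfolding rep_iso_def rep_sum_def \<sigma>_def by auto
    obtain Q where Q: "Q \<in> carrier_mat m m" "P * Q = 1\<^sub>m m" "Q * P = 1\<^sub>m m"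
      using invertible_matE[OF P] .
    have \<sigma>1: "\<sigma>1 a \<in> carrier_mat s1 s1" and \<sigma>2: "\<sigma>2 a \<in> carrier_mat s2 s2" for a
      using reps unfolding is_rep_def by blast+
    have \<sigma>_carrier: "\<sigma> a \<in> carrier_mat m m" for a
      unfolding \<sigma>_def m_eq using \<sigma>1 \<sigma>2 by simp
    have \<rho>_carrier: "\<rho> a \<in> carrier_mat m m" for a
      using rep unfolding is_rep_def by blast
    have E: "E \<in> carrier_mat m m" "E * \<sigma> a = \<sigma> a * E" "E * E = E" for a
      unfolding E_def \<sigma>_def m_eq using block_diag_idempotent[OF \<sigma>1 \<sigma>2] by auto
    note X = commuting_idempotent_conjugate[OF P(1) Q \<rho>_carrier \<sigma>_carrier intertwine E]
    have "Q * E * P = 0\<^sub>m m m \<or> Q * E * P = 1\<^sub>m m"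
      using X by (intro trivial) auto
    then have "E = 0\<^sub>m m m \<or> E = 1\<^sub>m m"
      using X(4) P(1) Q by auto
    moreover have "E $$ (0, 0) = 1" "E $$ (s1, s1) = 0"
      using pos unfolding E_def by simp_all
    ultimately show False
      using pos m_eq by auto
  qed
  then show ?thesis
    using rep m unfolding indecomposable_def by auto
qed

lemma infinite_rep_type_if_indecomposable_family:
  fixes \<rho> :: "nat \<Rightarrow> ('x::finite, 'l::{distrib_lattice, bounded_lattice}) corr \<Rightarrow> 'k::field mat"
  assumes "inj d" "\<And>n. indecomposable (d n, \<rho> n)"
  shows "infinite_rep_type TYPE('k) TYPE(('x, 'l) corr)"
  unfolding infinite_rep_type_def
proof (intro exI conjI)
  let ?F = "(\<lambda>n. (d n, \<rho> n)) ` UNIV"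
  have "inj (\<lambda>n. (d n, \<rho> n))"
    using assms(1) by (auto simp: inj_def)
  then show "infinite ?F"
    using finite_imageD infinite_UNIV_nat by blast
  show "\<forall>r\<in>?F. indecomposable r" using assms(2) by blast
  show "\<forall>r\<in>?F. \<forall>s\<in>?F. rep_iso r s \<longrightarrow> r = s"
    using assms(1) by (auto simp: rep_iso_def dest: injD)
qed

lemma is_rep_orbit_rep_atom_rel:
  fixes p q :: "'x::finite \<Rightarrow> 'x \<Rightarrow> bool" and a :: "'l::{distrib_lattice, bounded_lattice}"
  assumes a: "is_atom a" and p: "irreducible_elem rel_monoid p" and q: "irreducible_elem rel_monoid q"
  shows "is_rep (2*n+1) (\<lambda>R :: ('x, 'l) corr. orbit_rep rel_monoid p q n (atom_rel a R) :: 'k::field mat)"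
  unfolding is_rep_def
proof (intro conjI allI)
  interpret dedekind_finite_monoid "rel_monoid :: ('x \<Rightarrow> 'x \<Rightarrow> bool) monoid"
    by (rule dedekind_finite_rel_monoid)
  show "orbit_rep rel_monoid p q n (atom_rel a R) \<in> carrier_mat (2*n+1) (2*n+1)" for R :: "('x, 'l) corr"
    by (rule orbit_rep_carrier)
  show "orbit_rep rel_monoid p q n (atom_rel a (corr_one :: ('x, 'l) corr)) = (1\<^sub>m (2*n+1) :: 'k mat)"
    using orbit_rep_one[OF p q] by (simp add: atom_rel_corr_one[OF a])
  show "orbit_rep rel_monoid p q n (atom_rel a (corr_mult R S))
      = (orbit_rep rel_monoid p q n (atom_rel a R) :: 'k mat) * orbit_rep rel_monoid p q n (atom_rel a S)"
    for R S :: "('x, 'l) corr"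
    using orbit_rep_mult[OF p q, of "atom_rel a R" "atom_rel a S"]
    by (simp add: atom_rel_corr_mult[OF a])
qed

lemma indecomposable_orbit_rep_atom_rel:
  fixes p q :: "'x::finite \<Rightarrow> 'x \<Rightarrow> bool" and a :: "'l::{distrib_lattice, bounded_lattice}"
  assumes a: "is_atom a" and p: "irreducible_elem rel_monoid p" and q: "irreducible_elem rel_monoid q"
    and pq: "p \<notin> unit_orbit rel_monoid q" "q \<notin> unit_orbit rel_monoid p" and n: "0 < n"
  shows "indecomposable (2*n+1, \<lambda>R :: ('x, 'l) corr. orbit_rep rel_monoid p q n (atom_rel a R) :: 'k::field mat)"
proof (rule indecomposable_if_idempotents_trivial)
  interpret monoid "rel_monoid :: ('x \<Rightarrow> 'x \<Rightarrow> bool) monoid"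
    by (rule monoid_rel_monoid)
  let ?\<rho> = "\<lambda>R :: ('x, 'l) corr. orbit_rep rel_monoid p q n (atom_rel a R) :: 'k mat"
  show "is_rep (2*n+1) ?\<rho>" by (rule is_rep_orbit_rep_atom_rel[OF a p q])
  show "0 < 2*n+1" by simp
  fix X :: "'k mat"
  assume X: "X \<in> carrier_mat (2*n+1) (2*n+1)" and comm: "\<And>R. X * ?\<rho> R = ?\<rho> R * X" and idem: "X * X = X"
  have "?\<rho> (\<lambda>x y. if p x y then Orderings.top else bot) = kronecker_arrow n n"
    using orbit_rep_left[OF p pq(1)] by (simp add: atom_rel_indicator[OF a])
  moreover have "?\<rho> (\<lambda>x y. if q x y then Orderings.top else bot) = kronecker_arrow n (n+1)"
    using orbit_rep_right[OF q pq(2)] by (simp add: atom_rel_indicator[OF a])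
  ultimately have A: "X * kronecker_arrow n n = kronecker_arrow n n * X"
    and B: "X * kronecker_arrow n (n+1) = kronecker_arrow n (n+1) * X"
    using comm by metis+
  show "X = 0\<^sub>m (2*n+1) (2*n+1) \<or> X = 1\<^sub>m (2*n+1)"
    using idempotent_scalar_off_lower_left[OF X _ commute_kronecker_arrows_entry[OF X n A B] idem]
    by simp
qed

lemma obtain_distinct_list:
  fixes n :: nat
  assumes "n \<le> card (UNIV :: 'a set)"
  obtains xs :: "'a::finite list" where "distinct xs" "length xs = n"
proof -
  obtain S :: "'a set" where "card S = n"
    using obtain_subset_with_card_n[OF assms] by blast
  obtain xs where "distinct xs" "set xs = S"
    using finite_distinct_list[OF finite, of S] by blast
  moreover have "length xs = n"
    using distinct_card[OF \<open>distinct xs\<close>] \<open>set xs = S\<close> \<open>card S = n\<close> by simp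
  ultimately show thesis
    using that by blast
qed

theorem theorem11:
  assumes "card (UNIV :: 'x set) \<ge> 4"
    and "card (UNIV :: 'l set) > 1"
  shows "infinite_rep_type TYPE('k::field)
           TYPE(('x::finite, 'l::{finite,distrib_lattice,bounded_lattice}) corr)"
proof -
  obtain xs :: "'x list" where xs: "distinct xs" "length xs = 4"
    using obtain_distinct_list[OF assms(1)] .
  define p where "p = refl_graph (cycle_of_list (take 3 xs))"
  define q where "q = refl_graph (cycle_of_list xs)"
  have take3: "distinct (take 3 xs)" "length (take 3 xs) = 3"
    using xs by simp_all
  have irreducible: "irreducible_elem rel_monoid p" "irreducible_elem rel_monoid q"
    unfolding p_def q_def using take3 xs by (simp_all add: irreducible_refl_graph_cycle_of_list)
  have separated: "p \<notin> unit_orbit rel_monoid q" "q \<notin> unit_orbit rel_monoid p"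
    unfolding p_def q_def using take3 xs
    by (simp_all add: refl_graph_cycle_of_list_not_in_unit_orbit)
  obtain a :: 'l where "is_atom a"
    using finite_exists_atom[OF assms(2)] by blast
  show ?thesis
  proof (rule infinite_rep_type_if_indecomposable_family)
    show "inj (\<lambda>n. 2 * Suc n + 1)" by (auto intro: injI)
    show "indecomposable (2 * Suc n + 1,
        \<lambda>R :: ('x, 'l) corr. orbit_rep rel_monoid p q (Suc n) (atom_rel a R) :: 'k mat)" for n
      by (rule indecomposable_orbit_rep_atom_rel[OF \<open>is_atom a\<close> irreducible separated]) simp
  qed
qed

end
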